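(* Under the setup described in the context (a connected graph $G$ on $n$ vertices with $\mathrm{col}(G)=d\geq 3$, $M=K_1\vee G$ with apex $w$, and an $m$-fold cover $\mathcal{H}=(L,H)$ of $M$ with $m\geq d+3$ in which $E_H(L(u),L(v))$ is a perfect matching for every $uv\in E(M)$): if $L(w)$ contains exactly $s$ vertices that are not level vertices, then $$P_{DP}(M,\mathcal{H})\geq m\,P_{DP}(G,m-1)+s\,(m-d-2)^{n-2}.$$
   Context: All graphs are finite and simple. $\mathrm{col}(G)$ is the smallest $d$ such that some ordering of $V(G)$ has each vertex with at most $d-1$ earlier neighbors. $M=K_1\vee G$ is the join of $G$ with a single new vertex $w$. A cover of a graph $G$ is a pair $\mathcal{H}=(L,H)$ where $H$ is a graph and $L:V(G)\to\mathcal{P}(V(H))$ satisfies: (1) the sets $L(u)$ partition $V(H)$; (2) each $H[L(u)]$ is complete; (3) if $E_H(L(u),L(v))\neq\emptyset$ then $u=v$ or $uv\in E(G)$; (4) if $uv\in E(G)$ then $E_H(L(u),L(v))$ is a matching. $E_H(S,U)$ is the set of edges of $H$ between $S$ and $U$; the cover is $m$-fold if all $|L(u)|=m$; an $\mathcal{H}$-coloring is an independent set of $H$ of size $|V(G)|$, $P_{DP}(G,\mathcal{H})$ counts them, and $P_{DP}(G,m)$ is the minimum of $P_{DP}(G,\mathcal{H})$ over $m$-fold covers. Setup: write $L(w)=\{(w,j):j\in[m]\}$; for $j\in[m]$ and $v\in V(G)$ let $H^{(j)}=H-N_H[(w,j)]$ and $L^{(j)}(v)=L(v)\setminus N_H((w,j))$,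 so $\mathcal{H}^{(j)}=(L^{(j)},H^{(j)})$ is an $(m-1)$-fold cover of $G$. Cross-edges of $H^{(j)}$ are its edges joining $L^{(j)}(x)$ and $L^{(j)}(y)$ for distinct $x,y\in V(G)$. The vertex $(w,t)$ is a level vertex if $H^{(t)}$ has exactly $|E(G)|(m-1)$ cross-edges. *)

theory Defs
  imports Main
begin

definition simple_graph :: "'a set \<Rightarrow> 'a set set \<Rightarrow> bool" where
  "simple_graph V E \<longleftrightarrow> finite V \<and>
     (\<forall>e\<in>E. \<exists>u v. e = {u, v} \<and> u \<noteq> v \<and> u \<in> V \<and> v \<in> V)"

definition connected_graph :: "'a set \<Rightarrow> 'a set set \<Rightarrow> bool" where
  "connected_graph V E \<longleftrightarrow> V \<noteq> {} \<and>
     (\<forall>u\<in>V. \<forall>v\<in>V. (u, v) \<in> {(x, y). {x, y} \<in> E}\<^sup>*)"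

definition col :: "'a set \<Rightarrow> 'a set set \<Rightarrow> nat" where
  "col V E = (LEAST d. \<exists>xs. distinct xs \<and> set xs = V \<and>
      (\<forall>i<length xs. card {j. j < i \<and> {xs ! j, xs ! i} \<in> E} + 1 \<le> d))"

definition join_V :: "'a \<Rightarrow> 'a set \<Rightarrow> 'a set" where
  "join_V w V = insert w V"

definition join_E :: "'a \<Rightarrow> 'a set \<Rightarrow> 'a set set \<Rightarrow> 'a set set" where
  "join_E w V E = E \<union> {{w, v} | v. v \<in> V}"

definition is_cover :: "'a set \<Rightarrow> 'a set set \<Rightarrow> ('a \<Rightarrow> 'b set) \<Rightarrow> 'b set \<Rightarrow> 'b set set \<Rightarrow> bool" where
  "is_cover V E L HV HE \<longleftrightarrow>
     simple_graph HV HE \<and>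
     \<comment> \<open>(1) the sets L(u) partition V(H)\<close>
     (\<Union>u\<in>V. L u) = HV \<and>
     (\<forall>u\<in>V. \<forall>v\<in>V. u \<noteq> v \<longrightarrow> L u \<inter> L v = {}) \<and>
     \<comment> \<open>(2) each H[L(u)] is complete\<close>
     (\<forall>u\<in>V. \<forall>x\<in>L u. \<forall>y\<in>L u. x \<noteq> y \<longrightarrow> {x, y} \<in> HE) \<and>
     \<comment> \<open>(3) edges between L(u), L(v) only if u = v or uv is an edge\<close>
     (\<forall>u\<in>V. \<forall>v\<in>V. (\<exists>x\<in>L u. \<exists>y\<in>L v. {x, y} \<in> HE) \<longrightarrow> u = v \<or> {u, v} \<in> E) \<and>
     \<comment> \<open>(4) for uv in E, E_H(L(u),L(v)) is a matching\<close>
     (\<forall>u\<in>V. \<forall>v\<in>V. {u, v} \<in> E \<longrightarrow>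
        (\<forall>x\<in>L u. \<forall>y1\<in>L v. \<forall>y2\<in>L v. {x, y1} \<in> HE \<longrightarrow> {x, y2} \<in> HE \<longrightarrow> y1 = y2))"

definition m_fold :: "'a set \<Rightarrow> ('a \<Rightarrow> 'b set) \<Rightarrow> nat \<Rightarrow> bool" where
  "m_fold V L m \<longleftrightarrow> (\<forall>u\<in>V. finite (L u) \<and> card (L u) = m)"

definition independent :: "'b set set \<Rightarrow> 'b set \<Rightarrow> bool" where
  "independent HE I \<longleftrightarrow> (\<forall>x\<in>I. \<forall>y\<in>I. {x, y} \<notin> HE)"

definition P_DP_cover :: "'a set \<Rightarrow> 'b set \<Rightarrow> 'b set set \<Rightarrow> nat" where
  "P_DP_cover V HV HE = card {I. I \<subseteq> HV \<and> independent HE I \<and> card I = card V}"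

text \<open>DP color function: minimum over all m-fold covers. Every m-fold cover is
  isomorphic to one with V(H) = V \<times> {0..<m}, L(u) = {u} \<times> {0..<m}.\<close>
definition P_DP :: "'a set \<Rightarrow> 'a set set \<Rightarrow> nat \<Rightarrow> nat" where
  "P_DP V E m = Min ((\<lambda>HE. P_DP_cover V (V \<times> {..<m}) HE) `
      {HE. is_cover V E (\<lambda>u. {u} \<times> {..<m}) (V \<times> {..<m}) HE})"

definition perfect_matching_between :: "'b set set \<Rightarrow> 'b set \<Rightarrow> 'b set \<Rightarrow> bool" where
  "perfect_matching_between HE A B \<longleftrightarrow>
     (\<forall>x\<in>A. \<exists>!y. y \<in> B \<and> {x, y} \<in> HE) \<and> (\<forall>y\<in>B. \<exists>!x. x \<in> A \<and> {x, y} \<in> HE)"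

text \<open>Number of cross-edges of H^(t) = H - N_H[t], where L^(t)(v) = L(v) - N_H(t).\<close>
definition cross_edges_count :: "'a set \<Rightarrow> ('a \<Rightarrow> 'b set) \<Rightarrow> 'b set set \<Rightarrow> 'b \<Rightarrow> nat" where
  "cross_edges_count V L HE t = card {e \<in> HE. \<exists>x\<in>V. \<exists>y\<in>V. x \<noteq> y \<and>
      (\<exists>a \<in> L x - {z. {t, z} \<in> HE}. \<exists>b \<in> L y - {z. {t, z} \<in> HE}. e = {a, b})}"

definition level_vertex :: "'a set \<Rightarrow> 'a set set \<Rightarrow> ('a \<Rightarrow> 'b set) \<Rightarrow> 'b set set \<Rightarrow> nat \<Rightarrow> 'b \<Rightarrow> bool" where
  "level_vertex V E L HE m t \<longleftrightarrow> cross_edges_count V L HE t = card E * (m - 1)"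

end

theory Submission
  imports Defs "HOL-Library.FuncSet"
begin

text \<open>
  Every coloring of M uses exactly one vertex (w,t) of L(w), and deleting it leaves an
  H^(t)-coloring of G; hence P_DP(M,H) is the sum over t of the number of H^(t)-colorings, and
  each H^(t) is an (m-1)-fold cover of G.  If (w,t) is not level, some edge uv of G has the
  neighbours of (w,t) in L(u) and L(v) non-adjacent.  Their partners a in L^(t)(u) and b in
  L^(t)(v) under the perfect matchings then have no neighbours in L^(t)(v) and L^(t)(u)
  respectively, so adding the edge ab to H^(t) yields another (m-1)-fold cover of G, whose
  colorings are exactly the H^(t)-colorings not containing both a and b.  The H^(t)-colorings
  containing a and b are counted greedily along an ordering witnessing col(G) = d: each further
  vertex has at most d - 1 earlier neighbours besides u and v, so at least
  (m - 1) - (d + 1) = m - d - 2 of its colors remain available.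
\<close>

section \<open>Covers\<close>

lemma simple_graph_edgeE:
  assumes "simple_graph HV HE" "e \<in> HE"
  obtains a b where "e = {a, b}" "a \<noteq> b" "a \<in> HV" "b \<in> HV"
  using assms unfolding simple_graph_def by meson

lemma simple_graph_edge_subset: "simple_graph HV HE \<Longrightarrow> e \<in> HE \<Longrightarrow> e \<subseteq> HV"
  by (auto elim: simple_graph_edgeE)

lemma simple_graph_no_loop:
  assumes "simple_graph HV HE" shows "{x} \<notin> HE"
proof
  assume "{x} \<in> HE"
  with assms obtain u v where uv: "{x} = {u, v}" "u \<noteq> v" by (rule simple_graph_edgeE)
  then have "u \<in> {x}" "v \<in> {x}" by auto
  with uv(2) show False by simp
qed

lemma simple_graph_finite_edges: "simple_graph HV HE \<Longrightarrow> finite HE"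
  by (rule finite_subset[of _ "Pow HV"]) (auto dest: simple_graph_edge_subset simp: simple_graph_def)

lemma simple_graph_image:
  assumes sg: "simple_graph HV HE" and inj: "inj_on \<phi> HV"
  shows "simple_graph (\<phi> ` HV) ((\<lambda>e. \<phi> ` e) ` HE)"
  unfolding simple_graph_def
proof (intro conjI ballI)
  show "finite (\<phi> ` HV)" using sg by (simp add: simple_graph_def)
next
  fix e' assume "e' \<in> (\<lambda>e. \<phi> ` e) ` HE"
  then obtain e where e: "e \<in> HE" "e' = \<phi> ` e" by blast
  with sg obtain a b where ab: "e = {a, b}" "a \<noteq> b" "a \<in> HV" "b \<in> HV"
    by (blast elim: simple_graph_edgeE)
  then have "\<phi> a \<noteq> \<phi> b" using inj by (auto dest: inj_onD)
  with e ab show "\<exists>u v. e' = {u, v} \<and> u \<noteq> v \<and> u \<in> \<phi> ` HV \<and> v \<in> \<phi> ` HV" by auto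
qed

lemma simple_graph_induced:
  assumes sg: "simple_graph HV HE" and "HV' \<subseteq> HV"
  shows "simple_graph HV' {e \<in> HE. e \<subseteq> HV'}"
  unfolding simple_graph_def
proof (intro conjI ballI)
  show "finite HV'" using sg \<open>HV' \<subseteq> HV\<close> finite_subset by (auto simp: simple_graph_def)
next
  fix e assume e: "e \<in> {e \<in> HE. e \<subseteq> HV'}"
  then have "e \<in> HE" by simp
  with sg obtain a b where "e = {a, b}" "a \<noteq> b" by (rule simple_graph_edgeE)
  with e show "\<exists>a b. e = {a, b} \<and> a \<noteq> b \<and> a \<in> HV' \<and> b \<in> HV'" by auto
qed

lemma simple_graph_insert_edge:
  "simple_graph HV HE \<Longrightarrow> a \<in> HV \<Longrightarrow> b \<in> HV \<Longrightarrow> a \<noteq> b \<Longrightarrow> simple_graph HV (insert {a, b} HE)"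
  by (auto simp: simple_graph_def)

lemma independent_insert:
  "independent HE (insert c J) \<longleftrightarrow> {c} \<notin> HE \<and> (\<forall>j\<in>J. {c, j} \<notin> HE) \<and> independent HE J"
  unfolding independent_def by (auto simp: insert_commute)

lemma independent_insert_edge:
  "independent (insert {a, b} HE) I \<longleftrightarrow> independent HE I \<and> \<not> (a \<in> I \<and> b \<in> I)"
  unfolding independent_def by (auto simp: doubleton_eq_iff)

lemma is_cover_simple_graph: "is_cover V E L HV HE \<Longrightarrow> simple_graph HV HE"
  by (simp add: is_cover_def)

lemma is_cover_vertices: "is_cover V E L HV HE \<Longrightarrow> HV = (\<Union>u\<in>V. L u)"
  by (simp add: is_cover_def)

lemma is_cover_disjoint:
  "is_cover V E L HV HE \<Longrightarrow> u \<in> V \<Longrightarrow> v \<in> V \<Longrightarrow> x \<in> L u \<Longrightarrow> x \<in> L v \<Longrightarrow> u = v"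
  unfolding is_cover_def by (elim conjE) blast

lemma is_cover_clique:
  "is_cover V E L HV HE \<Longrightarrow> u \<in> V \<Longrightarrow> x \<in> L u \<Longrightarrow> y \<in> L u \<Longrightarrow> x \<noteq> y \<Longrightarrow> {x, y} \<in> HE"
  unfolding is_cover_def by (elim conjE) blast

lemma is_cover_edge:
  "is_cover V E L HV HE \<Longrightarrow> u \<in> V \<Longrightarrow> v \<in> V \<Longrightarrow> x \<in> L u \<Longrightarrow> y \<in> L v \<Longrightarrow> {x, y} \<in> HE
    \<Longrightarrow> u = v \<or> {u, v} \<in> E"
  unfolding is_cover_def by (elim conjE) blast

lemma is_cover_matching:
  "is_cover V E L HV HE \<Longrightarrow> u \<in> V \<Longrightarrow> v \<in> V \<Longrightarrow> {u, v} \<in> E \<Longrightarrow> x \<in> L u \<Longrightarrow>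
    y1 \<in> L v \<Longrightarrow> y2 \<in> L v \<Longrightarrow> {x, y1} \<in> HE \<Longrightarrow> {x, y2} \<in> HE \<Longrightarrow> y1 = y2"
  unfolding is_cover_def by (elim conjE) blast

lemma is_coverI:
  assumes "simple_graph HV HE" "HV = (\<Union>u\<in>V. L u)"
    and "\<And>u v x. u \<in> V \<Longrightarrow> v \<in> V \<Longrightarrow> x \<in> L u \<Longrightarrow> x \<in> L v \<Longrightarrow> u = v"
    and "\<And>u x y. u \<in> V \<Longrightarrow> x \<in> L u \<Longrightarrow> y \<in> L u \<Longrightarrow> x \<noteq> y \<Longrightarrow> {x, y} \<in> HE"
    and "\<And>u v x y. u \<in> V \<Longrightarrow> v \<in> V \<Longrightarrow> x \<in> L u \<Longrightarrow> y \<in> L v \<Longrightarrow> {x, y} \<in> HE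
           \<Longrightarrow> u = v \<or> {u, v} \<in> E"
    and "\<And>u v x y1 y2. u \<in> V \<Longrightarrow> v \<in> V \<Longrightarrow> {u, v} \<in> E \<Longrightarrow> x \<in> L u \<Longrightarrow> y1 \<in> L v \<Longrightarrow>
           y2 \<in> L v \<Longrightarrow> {x, y1} \<in> HE \<Longrightarrow> {x, y2} \<in> HE \<Longrightarrow> y1 = y2"
  shows "is_cover V E L HV HE"
  unfolding is_cover_def using assms by blast

lemma is_cover_restrict:
  assumes cov: "is_cover V' E' L HV HE" and "V \<subseteq> V'"
    and sub: "\<And>u. u \<in> V \<Longrightarrow> L' u \<subseteq> L u"
    and edges: "\<And>u v. u \<in> V \<Longrightarrow> v \<in> V \<Longrightarrow> {u, v} \<in> E' \<longleftrightarrow> {u, v} \<in> E"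
  shows "is_cover V E L' (\<Union>u\<in>V. L' u) {e \<in> HE. e \<subseteq> (\<Union>u\<in>V. L' u)}"
proof (rule is_coverI)
  let ?HV = "\<Union>u\<in>V. L' u"
  have "?HV \<subseteq> HV" using sub is_cover_vertices[OF cov] \<open>V \<subseteq> V'\<close> by blast
  then show "simple_graph ?HV {e \<in> HE. e \<subseteq> ?HV}"
    using simple_graph_induced[OF is_cover_simple_graph[OF cov]] by blast
  have V': "u \<in> V'" and L': "x \<in> L' u \<Longrightarrow> x \<in> L u" if "u \<in> V" for u x
    using that sub \<open>V \<subseteq> V'\<close> by auto
  show "u = v" if "u \<in> V" "v \<in> V" "x \<in> L' u" "x \<in> L' v" for u v x
    using is_cover_disjoint[OF cov V' V' L' L'] that by blast
  show "{x, y} \<in> {e \<in> HE. e \<subseteq> ?HV}" if "u \<in> V" "x \<in> L' u" "y \<in> L' u" "x \<noteq> y" for u x y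
    using is_cover_clique[OF cov V' L' L'] that by auto
  show "u = v \<or> {u, v} \<in> E"
    if "u \<in> V" "v \<in> V" "x \<in> L' u" "y \<in> L' v" "{x, y} \<in> {e \<in> HE. e \<subseteq> ?HV}" for u v x y
    using is_cover_edge[OF cov V' V' L' L'] edges that by auto
  show "y1 = y2"
    if "u \<in> V" "v \<in> V" "{u, v} \<in> E" "x \<in> L' u" "y1 \<in> L' v" "y2 \<in> L' v"
      "{x, y1} \<in> {e \<in> HE. e \<subseteq> ?HV}" "{x, y2} \<in> {e \<in> HE. e \<subseteq> ?HV}" for u v x y1 y2
    using is_cover_matching[OF cov V' V' _ L' L' L'] edges that by auto
qed (rule refl)

lemma is_cover_insert_edge:
  assumes cov: "is_cover V E L HV HE" and u: "u \<in> V" and v: "v \<in> V" and "u \<noteq> v"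
    and uv: "{u, v} \<in> E" and a: "a \<in> L u" and b: "b \<in> L v"
    and a_free: "\<And>y. y \<in> L v \<Longrightarrow> {a, y} \<notin> HE" and b_free: "\<And>y. y \<in> L u \<Longrightarrow> {b, y} \<notin> HE"
  shows "is_cover V E L HV (insert {a, b} HE)"
proof (rule is_coverI)
  have owner_a: "p = u" if "p \<in> V" "a \<in> L p" for p
    using is_cover_disjoint[OF cov that(1) u that(2) a] .
  have owner_b: "q = v" if "q \<in> V" "b \<in> L q" for q
    using is_cover_disjoint[OF cov that(1) v that(2) b] .
  have ends: "x = a \<and> y = b \<or> x = b \<and> y = a" if "{x, y} = {a, b}" for x y
    using that by (auto simp: doubleton_eq_iff)
  have "a \<noteq> b" using owner_a[OF v] b \<open>u \<noteq> v\<close> by blast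
  moreover have "a \<in> HV" "b \<in> HV" using is_cover_vertices[OF cov] u v a b by auto
  ultimately show "simple_graph HV (insert {a, b} HE)"
    using simple_graph_insert_edge[OF is_cover_simple_graph[OF cov]] by blast
  show "HV = (\<Union>u\<in>V. L u)" using is_cover_vertices[OF cov] .
  show "p = q" if "p \<in> V" "q \<in> V" "x \<in> L p" "x \<in> L q" for p q x
    using is_cover_disjoint[OF cov that] .
  show "{x, y} \<in> insert {a, b} HE" if "p \<in> V" "x \<in> L p" "y \<in> L p" "x \<noteq> y" for p x y
    using is_cover_clique[OF cov that] by simp
  show "p = q \<or> {p, q} \<in> E"
    if pq: "p \<in> V" "q \<in> V" "x \<in> L p" "y \<in> L q" "{x, y} \<in> insert {a, b} HE" for p q x y
  proof (cases "{x, y} = {a, b}")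
    case True
    then show ?thesis using ends[OF True] owner_a owner_b pq uv by (auto simp: insert_commute)
  next
    case False
    then show ?thesis using is_cover_edge[OF cov pq(1-4)] pq(5) by simp
  qed
  have lonely: False
    if "q \<in> V" "{x, y} = {a, b}" "y \<in> L q" "y' \<in> L q" "{x, y'} \<in> HE" for q x y y'
    using ends[OF that(2)] owner_a owner_b a_free b_free that by blast
  show "y1 = y2"
    if pq: "p \<in> V" "q \<in> V" "{p, q} \<in> E" "x \<in> L p" "y1 \<in> L q" "y2 \<in> L q"
      and e: "{x, y1} \<in> insert {a, b} HE" "{x, y2} \<in> insert {a, b} HE" for p q x y1 y2
  proof (cases "{x, y1} = {a, b}"; cases "{x, y2} = {a, b}")
    assume "{x, y1} \<noteq> {a, b}" "{x, y2} \<noteq> {a, b}"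
    then show ?thesis using is_cover_matching[OF cov pq] e by simp
  qed (use lonely pq e in \<open>auto simp: doubleton_eq_iff\<close>)
qed

lemma card_edges_between:
  assumes pm: "perfect_matching_between HE A B" and "A \<inter> B = {}" and "finite A"
  shows "card {f \<in> HE. \<exists>a\<in>A. \<exists>b\<in>B. f = {a, b}} = card A"
proof -
  define p where "p a = (THE b. b \<in> B \<and> {a, b} \<in> HE)" for a
  have p: "p a \<in> B \<and> {a, p a} \<in> HE" and p_unique: "\<And>b. b \<in> B \<Longrightarrow> {a, b} \<in> HE \<Longrightarrow> b = p a"
    if "a \<in> A" for a
  proof -
    have ex1: "\<exists>!b. b \<in> B \<and> {a, b} \<in> HE" using pm that unfolding perfect_matching_between_def by blast
    show "p a \<in> B \<and> {a, p a} \<in> HE" unfolding p_def using theI'[OF ex1] .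
    then show "\<And>b. b \<in> B \<Longrightarrow> {a, b} \<in> HE \<Longrightarrow> b = p a" using ex1 by blast
  qed
  have "{f \<in> HE. \<exists>a\<in>A. \<exists>b\<in>B. f = {a, b}} = (\<lambda>a. {a, p a}) ` A"
    using p p_unique by blast
  moreover have "inj_on (\<lambda>a. {a, p a}) A"
    using p \<open>A \<inter> B = {}\<close> by (fastforce simp: inj_on_def doubleton_eq_iff)
  ultimately show ?thesis by (simp add: card_image)
qed

lemma perfect_matching_between_Diff:
  assumes pm: "perfect_matching_between HE A B" and ab: "a \<in> A" "b \<in> B" "{a, b} \<in> HE"
  shows "perfect_matching_between HE (A - {a}) (B - {b})"
proof -
  have AB: "\<And>x. x \<in> A \<Longrightarrow> \<exists>!y. y \<in> B \<and> {x, y} \<in> HE"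
    and BA: "\<And>y. y \<in> B \<Longrightarrow> \<exists>!x. x \<in> A \<and> {x, y} \<in> HE"
    using pm unfolding perfect_matching_between_def by blast+
  have "\<exists>!y. y \<in> B - {b} \<and> {x, y} \<in> HE" if x: "x \<in> A - {a}" for x
  proof -
    from AB x obtain y where y: "y \<in> B" "{x, y} \<in> HE" and uniq: "\<And>y'. y' \<in> B \<Longrightarrow> {x, y'} \<in> HE \<Longrightarrow> y' = y"
      by blast
    have "y \<noteq> b" using BA[OF ab(2)] ab(1,3) y x by blast
    with y uniq show ?thesis by blast
  qed
  moreover have "\<exists>!x. x \<in> A - {a} \<and> {x, y} \<in> HE" if y: "y \<in> B - {b}" for y
  proof -
    from BA y obtain x where x: "x \<in> A" "{x, y} \<in> HE" and uniq: "\<And>x'. x' \<in> A \<Longrightarrow> {x', y} \<in> HE \<Longrightarrow> x' = x"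
      by blast
    have "x \<noteq> a" using AB[OF ab(1)] ab(2,3) x y by blast
    with x uniq show ?thesis by blast
  qed
  ultimately show ?thesis unfolding perfect_matching_between_def by blast
qed

section \<open>Counting colourings\<close>

definition DP_colorings :: "'a set \<Rightarrow> 'b set \<Rightarrow> 'b set set \<Rightarrow> 'b set set" where
  "DP_colorings V HV HE = {I. I \<subseteq> HV \<and> independent HE I \<and> card I = card V}"

lemma P_DP_cover_eq_card: "P_DP_cover V HV HE = card (DP_colorings V HV HE)"
  unfolding P_DP_cover_def DP_colorings_def ..

lemma finite_DP_colorings: "finite HV \<Longrightarrow> finite (DP_colorings V HV HE)"
  unfolding DP_colorings_def by (rule finite_subset[of _ "Pow HV"]) auto

lemma card_independent_le:
  assumes clique: "\<forall>u\<in>U. \<forall>x\<in>L u. \<forall>y\<in>L u. x \<noteq> y \<longrightarrow> {x, y} \<in> HE"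
    and indep: "independent HE I" and I: "I \<subseteq> (\<Union>u\<in>U. L u)" and "finite U"
  shows "card I \<le> card U"
proof -
  define owner where "owner x = (SOME u. u \<in> U \<and> x \<in> L u)" for x
  have owner: "owner x \<in> U \<and> x \<in> L (owner x)" if "x \<in> I" for x
    unfolding owner_def by (rule someI_ex) (use that I in auto)
  have "inj_on owner I"
  proof (rule inj_onI, rule ccontr)
    fix x y assume "x \<in> I" "y \<in> I" "owner x = owner y" "x \<noteq> y"
    then have "{x, y} \<in> HE" using clique owner by metis
    with indep \<open>x \<in> I\<close> \<open>y \<in> I\<close> show False unfolding independent_def by blast
  qed
  then show ?thesis using card_inj_on_le owner \<open>finite U\<close> by (metis image_subsetI)
qed

lemma edge_image_iff:
  assumes inj: "inj_on \<phi> HV" and sg: "simple_graph HV HE" and "x \<in> HV" "y \<in> HV"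
  shows "{\<phi> x, \<phi> y} \<in> (\<lambda>e. \<phi> ` e) ` HE \<longleftrightarrow> {x, y} \<in> HE"
proof
  assume "{\<phi> x, \<phi> y} \<in> (\<lambda>e. \<phi> ` e) ` HE"
  then obtain e where e: "e \<in> HE" "{\<phi> x, \<phi> y} = \<phi> ` e" by blast
  have "\<phi> ` {x, y} = \<phi> ` e" "{x, y} \<subseteq> HV" "e \<subseteq> HV"
    using e assms(3,4) simple_graph_edge_subset[OF sg] by auto
  then have "{x, y} = e" using inj_on_image_eq_iff[OF inj] by metis
  with e show "{x, y} \<in> HE" by simp
next
  assume "{x, y} \<in> HE"
  then show "{\<phi> x, \<phi> y} \<in> (\<lambda>e. \<phi> ` e) ` HE" by (rule rev_image_eqI) simp
qed

lemma is_cover_image: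
  assumes cov: "is_cover V E L HV HE" and inj: "inj_on \<phi> HV"
  shows "is_cover V E (\<lambda>u. \<phi> ` L u) (\<phi> ` HV) ((\<lambda>e. \<phi> ` e) ` HE)"
proof (rule is_coverI)
  have sg: "simple_graph HV HE" using is_cover_simple_graph[OF cov] .
  have L_HV: "\<And>u x. u \<in> V \<Longrightarrow> x \<in> L u \<Longrightarrow> x \<in> HV" using is_cover_vertices[OF cov] by blast
  note edge_iff = edge_image_iff[OF inj sg L_HV L_HV]
  show "simple_graph (\<phi> ` HV) ((\<lambda>e. \<phi> ` e) ` HE)" using simple_graph_image[OF sg inj] .
  show "\<phi> ` HV = (\<Union>u\<in>V. \<phi> ` L u)" using is_cover_vertices[OF cov] by auto
  show "u = v" if "u \<in> V" "v \<in> V" "x \<in> \<phi> ` L u" "x \<in> \<phi> ` L v" for u v x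
    using that is_cover_disjoint[OF cov] L_HV inj by (auto dest: inj_onD)
  show "{x, y} \<in> (\<lambda>e. \<phi> ` e) ` HE"
    if h: "u \<in> V" "x \<in> \<phi> ` L u" "y \<in> \<phi> ` L u" "x \<noteq> y" for u x y
  proof -
    obtain a b where ab: "a \<in> L u" "b \<in> L u" "x = \<phi> a" "y = \<phi> b" using h by blast
    then show ?thesis using h edge_iff[OF h(1) ab(1) h(1) ab(2)] is_cover_clique[OF cov] by auto
  qed
  show "u = v \<or> {u, v} \<in> E"
    if h: "u \<in> V" "v \<in> V" "x \<in> \<phi> ` L u" "y \<in> \<phi> ` L v" "{x, y} \<in> (\<lambda>e. \<phi> ` e) ` HE" for u v x y
  proof -
    obtain a b where ab: "a \<in> L u" "b \<in> L v" "x = \<phi> a" "y = \<phi> b" using h by blast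
    then show ?thesis using h edge_iff[OF h(1) ab(1) h(2) ab(2)] is_cover_edge[OF cov] by auto
  qed
  show "y1 = y2"
    if h: "u \<in> V" "v \<in> V" "{u, v} \<in> E" "x \<in> \<phi> ` L u" "y1 \<in> \<phi> ` L v" "y2 \<in> \<phi> ` L v"
      "{x, y1} \<in> (\<lambda>e. \<phi> ` e) ` HE" "{x, y2} \<in> (\<lambda>e. \<phi> ` e) ` HE" for u v x y1 y2
  proof -
    obtain a b1 b2 where ab: "a \<in> L u" "b1 \<in> L v" "b2 \<in> L v" "x = \<phi> a" "y1 = \<phi> b1" "y2 = \<phi> b2"
      using h by blast
    then have "{a, b1} \<in> HE" "{a, b2} \<in> HE"
      using h(7,8) edge_iff[OF h(1) ab(1) h(2) ab(2)] edge_iff[OF h(1) ab(1) h(2) ab(3)] by auto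
    then show ?thesis using is_cover_matching[OF cov h(1-3) ab(1-3)] ab by simp
  qed
qed

lemma is_cover_cong: "(\<And>u. u \<in> V \<Longrightarrow> L u = L' u) \<Longrightarrow> is_cover V E L HV HE = is_cover V E L' HV HE"
  unfolding is_cover_def by (simp cong: ball_cong)

lemma P_DP_cover_image:
  assumes sg: "simple_graph HV HE" and inj: "inj_on \<phi> HV"
  shows "P_DP_cover V (\<phi> ` HV) ((\<lambda>e. \<phi> ` e) ` HE) = P_DP_cover V HV HE"
proof -
  have indep: "independent ((\<lambda>e. \<phi> ` e) ` HE) (\<phi> ` I) \<longleftrightarrow> independent HE I" if "I \<subseteq> HV" for I
    using that by (auto simp: independent_def edge_image_iff[OF inj sg] subset_iff)
  have card: "card (\<phi> ` I) = card I" if "I \<subseteq> HV" for I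
    using that inj by (meson card_image inj_on_subset)
  have "DP_colorings V (\<phi> ` HV) ((\<lambda>e. \<phi> ` e) ` HE) = (\<lambda>I. \<phi> ` I) ` DP_colorings V HV HE"
    unfolding DP_colorings_def by (auto simp: subset_image_iff indep card)
  moreover have "inj_on (\<lambda>I. \<phi> ` I) (DP_colorings V HV HE)"
    using inj_on_image_eq_iff[OF inj] by (auto simp: DP_colorings_def inj_on_def)
  ultimately show ?thesis by (simp add: P_DP_cover_eq_card card_image)
qed

lemma cover_relabelling:
  assumes cov: "is_cover V E L HV HE" and mf: "m_fold V L k"
  obtains \<phi> where "inj_on \<phi> HV" "\<And>u. u \<in> V \<Longrightarrow> \<phi> ` L u = {u} \<times> {..<k}"
proof -
  have "\<forall>u\<in>V. \<exists>g. bij_betw g (L u) {..<k}"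
    using mf finite_same_card_bij[of _ "{..<k}"] unfolding m_fold_def by auto
  then obtain g where g: "\<forall>u\<in>V. bij_betw (g u) (L u) {..<k}" by (metis bchoice)
  define owner where "owner x = (THE u. u \<in> V \<and> x \<in> L u)" for x
  have owner: "owner x = u" if "u \<in> V" "x \<in> L u" for u x
    unfolding owner_def using that is_cover_disjoint[OF cov] by (blast intro: the_equality)
  define \<phi> where "\<phi> x = (owner x, g (owner x) x)" for x
  have "inj_on \<phi> HV"
  proof (rule inj_onI)
    fix x y assume "x \<in> HV" "y \<in> HV" and eq: "\<phi> x = \<phi> y"
    then obtain u v where "u \<in> V" "x \<in> L u" "v \<in> V" "y \<in> L v"
      using is_cover_vertices[OF cov] by blast
    with eq g show "x = y" by (auto simp: \<phi>_def owner bij_betw_def dest: inj_onD)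
  qed
  moreover have "\<phi> ` L u = {u} \<times> {..<k}" if "u \<in> V" for u
  proof -
    have "\<phi> ` L u = (\<lambda>x. (u, g u x)) ` L u" using owner that by (auto simp: \<phi>_def)
    also have "\<dots> = {u} \<times> g u ` L u" by auto
    finally show ?thesis using g that by (simp add: bij_betw_def)
  qed
  ultimately show ?thesis using that by blast
qed

lemma finite_covers: "finite HV \<Longrightarrow> finite {HE. is_cover V E L HV HE}"
  by (rule finite_subset[of _ "Pow (Pow HV)"]) (auto simp: is_cover_def dest: simple_graph_edge_subset)

lemma P_DP_le_P_DP_cover:
  assumes cov: "is_cover V E L HV HE" and mf: "m_fold V L k" and "finite V"
  shows "P_DP V E k \<le> P_DP_cover V HV HE"
proof -
  obtain \<phi> where inj: "inj_on \<phi> HV" and L: "\<And>u. u \<in> V \<Longrightarrow> \<phi> ` L u = {u} \<times> {..<k}"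
    using cover_relabelling[OF cov mf] by blast
  have HV: "\<phi> ` HV = V \<times> {..<k}"
    using is_cover_vertices[OF cov] L by (auto simp: image_UN)
  have "is_cover V E (\<lambda>u. {u} \<times> {..<k}) (V \<times> {..<k}) ((\<lambda>e. \<phi> ` e) ` HE)"
    using is_cover_image[OF cov inj] is_cover_cong[of V "\<lambda>u. \<phi> ` L u" "\<lambda>u. {u} \<times> {..<k}"] L HV
    by simp
  then have "P_DP V E k \<le> P_DP_cover V (\<phi> ` HV) ((\<lambda>e. \<phi> ` e) ` HE)"
    unfolding P_DP_def HV using finite_covers[of "V \<times> {..<k}"] \<open>finite V\<close> by (intro Min_le) auto
  also have "\<dots> = P_DP_cover V HV HE"
    using P_DP_cover_image[OF is_cover_simple_graph[OF cov] inj] .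
  finally show ?thesis .
qed

definition proper_choices :: "('a \<Rightarrow> 'b set) \<Rightarrow> 'b set set \<Rightarrow> 'a set \<Rightarrow> ('a \<Rightarrow> 'b) set" where
  "proper_choices A HE S = {f \<in> Pi\<^sub>E S A. independent HE (f ` S)}"

lemma finite_proper_choices:
  "finite S \<Longrightarrow> (\<And>y. y \<in> S \<Longrightarrow> finite (A y)) \<Longrightarrow> finite (proper_choices A HE S)"
  unfolding proper_choices_def by (rule finite_subset[OF _ finite_PiE[of S A]]) auto

lemma fun_upd_in_proper_choices:
  assumes f: "f \<in> proper_choices A HE S" and "x \<notin> S" and "c \<in> A x" and "{c} \<notin> HE"
    and "\<And>y. y \<in> S \<Longrightarrow> {c, f y} \<notin> HE"
  shows "f(x := c) \<in> proper_choices A HE (insert x S)"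
proof -
  have img: "f(x := c) ` insert x S = insert c (f ` S)" using \<open>x \<notin> S\<close> by auto
  have "f(x := c) \<in> Pi\<^sub>E (insert x S) A"
    using assms(1-3) by (auto simp: proper_choices_def PiE_iff extensional_def)
  moreover have "independent HE (insert c (f ` S))"
    using assms by (auto simp: proper_choices_def independent_insert)
  ultimately show ?thesis unfolding proper_choices_def mem_Collect_eq img by blast
qed

lemma card_available_colours_ge:
  assumes "N \<subseteq> S" "finite N" "finite (A x)" and fA: "\<And>y. y \<in> S \<Longrightarrow> f y \<in> A y"
    and matching: "\<And>y c. y \<in> S \<Longrightarrow> c \<in> A y \<Longrightarrow> card {c' \<in> A x. {c, c'} \<in> HE} \<le> 1"
    and non_adjacent: "\<And>y c c'. y \<in> S - N \<Longrightarrow> c \<in> A y \<Longrightarrow> c' \<in> A x \<Longrightarrow> {c, c'} \<notin> HE"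
    and room: "q + card N \<le> card (A x)"
  shows "q \<le> card {c \<in> A x. \<forall>y\<in>S. {f y, c} \<notin> HE}"
proof -
  let ?free = "{c \<in> A x. \<forall>y\<in>S. {f y, c} \<notin> HE}"
  have "A x - ?free \<subseteq> (\<Union>y\<in>N. {c \<in> A x. {f y, c} \<in> HE})"
    using non_adjacent fA by blast
  then have "card (A x - ?free) \<le> card (\<Union>y\<in>N. {c \<in> A x. {f y, c} \<in> HE})"
    using assms(2,3) by (intro card_mono) auto
  also have "\<dots> \<le> (\<Sum>y\<in>N. card {c \<in> A x. {f y, c} \<in> HE})"
    using \<open>finite N\<close> by (rule card_UN_le)
  also have "\<dots> \<le> (\<Sum>y\<in>N. 1)"
    using matching fA \<open>N \<subseteq> S\<close> by (intro sum_mono) blast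
  finally have "card (A x - ?free) \<le> card N" by simp
  moreover have "card (A x - ?free) = card (A x) - card ?free"
    using assms(3) by (intro card_Diff_subset) auto
  ultimately show ?thesis using room card_mono[OF assms(3), of ?free] by auto
qed

lemma card_proper_choices_insert_ge:
  assumes "finite S" "x \<notin> S" "N \<subseteq> S" and fin: "\<And>y. y \<in> insert x S \<Longrightarrow> finite (A y)"
    and no_loop: "\<And>c. c \<in> A x \<Longrightarrow> {c} \<notin> HE"
    and matching: "\<And>y c. y \<in> S \<Longrightarrow> c \<in> A y \<Longrightarrow> card {c' \<in> A x. {c, c'} \<in> HE} \<le> 1"
    and non_adjacent: "\<And>y c c'. y \<in> S - N \<Longrightarrow> c \<in> A y \<Longrightarrow> c' \<in> A x \<Longrightarrow> {c, c'} \<notin> HE"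
    and room: "q + card N \<le> card (A x)"
  shows "card (proper_choices A HE S) * q \<le> card (proper_choices A HE (insert x S))"
proof -
  define free where "free f = {c \<in> A x. \<forall>y\<in>S. {f y, c} \<notin> HE}" for f
  have finAx: "finite (A x)" using fin by simp
  have q_le_free: "q \<le> card (free f)" if "f \<in> proper_choices A HE S" for f
    unfolding free_def
    using that assms(1,3) finAx matching non_adjacent room finite_subset
    by (intro card_available_colours_ge) (auto simp: proper_choices_def)
  define extend :: "('a \<Rightarrow> 'b) \<times> 'b \<Rightarrow> 'a \<Rightarrow> 'b" where "extend = (\<lambda>(f, c). f(x := c))"
  have extend_mem: "extend (f, c) \<in> proper_choices A HE (insert x S)"
    if "f \<in> proper_choices A HE S" "c \<in> free f" for f c
    using fun_upd_in_proper_choices[OF that(1) \<open>x \<notin> S\<close>] that no_loop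
    by (auto simp: extend_def free_def insert_commute)
  have "inj_on extend (Sigma (proper_choices A HE S) free)"
  proof (rule inj_onI, clarsimp)
    fix f c g c' assume "f \<in> proper_choices A HE S" "g \<in> proper_choices A HE S"
      and eq: "extend (f, c) = extend (g, c')"
    then have "f x = g x" using \<open>x \<notin> S\<close> by (auto simp: proper_choices_def PiE_iff extensional_def)
    with eq show "f = g \<and> c = c'" unfolding extend_def by (metis fun_upd_idem_iff fun_upd_same fun_upd_upd split_conv)
  qed
  have "card (proper_choices A HE S) * q \<le> (\<Sum>f\<in>proper_choices A HE S. card (free f))"
    using sum_bounded_below[of "proper_choices A HE S" q "\<lambda>f. card (free f)"] q_le_free by simp
  also have "\<dots> = card (Sigma (proper_choices A HE S) free)"
    using finite_proper_choices[OF \<open>finite S\<close>] fin finAx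
    by (intro card_SigmaI[symmetric]) (auto simp: free_def)
  also have "\<dots> = card (extend ` Sigma (proper_choices A HE S) free)"
    using card_image[OF \<open>inj_on extend _\<close>] by simp
  also have "\<dots> \<le> card (proper_choices A HE (insert x S))"
    using extend_mem \<open>finite S\<close> fin
    by (intro card_mono finite_proper_choices) auto
  finally show ?thesis .
qed

lemma card_proper_choices_extend:
  assumes "distinct xs" "finite S"
    and fin: "\<And>y. y \<in> S \<union> set xs \<Longrightarrow> finite (A y)"
    and no_loop: "\<And>x c. x \<in> set xs \<Longrightarrow> c \<in> A x \<Longrightarrow> {c} \<notin> HE"
    and matching: "\<And>x y c. x \<in> set xs \<Longrightarrow> y \<in> S \<union> set xs \<Longrightarrow> y \<noteq> x \<Longrightarrow> c \<in> A y \<Longrightarrow>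
      card {c' \<in> A x. {c, c'} \<in> HE} \<le> 1"
    and non_adjacent: "\<And>x y c c'. x \<in> set xs \<Longrightarrow> y \<in> S \<union> set xs \<Longrightarrow> y \<noteq> x \<Longrightarrow> {y, x} \<notin> E \<Longrightarrow>
      c \<in> A y \<Longrightarrow> c' \<in> A x \<Longrightarrow> {c, c'} \<notin> HE"
    and room: "\<And>k. k < length xs \<Longrightarrow> xs ! k \<notin> S \<Longrightarrow>
      q + card {y \<in> S \<union> set (take k xs). {y, xs ! k} \<in> E} \<le> card (A (xs ! k))"
  shows "card (proper_choices A HE S) * q ^ card (set xs - S) \<le> card (proper_choices A HE (S \<union> set xs))"
proof -
  have "card (proper_choices A HE S) * q ^ card (set (take k xs) - S)
      \<le> card (proper_choices A HE (S \<union> set (take k xs)))" if "k \<le> length xs" for k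
    using that
  proof (induction k)
    case (Suc k)
    define x where "x = xs ! k"
    define S' where "S' = S \<union> set (take k xs)"
    have k: "k < length xs" using Suc.prems by simp
    have take_Suc: "set (take (Suc k) xs) = insert x (set (take k xs))"
      using k by (simp add: x_def take_Suc_conv_app_nth)
    have x: "x \<in> set xs" "x \<notin> set (take k xs)"
      using k \<open>distinct xs\<close> by (auto simp: x_def in_set_conv_nth nth_eq_iff_index_eq)
    have IH: "card (proper_choices A HE S) * q ^ card (set (take k xs) - S) \<le> card (proper_choices A HE S')"
      using Suc by (simp add: S'_def)
    show ?case
    proof (cases "x \<in> S")
      case True
      then show ?thesis using IH take_Suc by (simp add: S'_def insert_absorb)
    next
      case False
      have S'_sub: "S' \<subseteq> S \<union> set xs" using set_take_subset[of k xs] by (auto simp: S'_def)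
      have "x \<notin> S'" using False x by (simp add: S'_def)
      have step: "card (proper_choices A HE S') * q \<le> card (proper_choices A HE (insert x S'))"
      proof (rule card_proper_choices_insert_ge[where N = "{y \<in> S'. {y, x} \<in> E}"])
        show "finite S'" using \<open>finite S\<close> by (simp add: S'_def)
        show "x \<notin> S'" by fact
        show "q + card {y \<in> S'. {y, x} \<in> E} \<le> card (A x)"
          using room[OF k] False by (simp add: x_def S'_def)
        show "card {c' \<in> A x. {c, c'} \<in> HE} \<le> 1" if "y \<in> S'" "c \<in> A y" for y c
          using matching[of x y c] that S'_sub x \<open>x \<notin> S'\<close> by blast
        show "{c, c'} \<notin> HE" if "y \<in> S' - {y \<in> S'. {y, x} \<in> E}" "c \<in> A y" "c' \<in> A x" for y c c'
          using non_adjacent[of x y c c'] that S'_sub x \<open>x \<notin> S'\<close> by blast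
      qed (use S'_sub x fin no_loop in auto)
      have "card (set (take (Suc k) xs) - S) = Suc (card (set (take k xs) - S))"
        using False x take_Suc by (simp add: insert_Diff_if)
      then have "card (proper_choices A HE S) * q ^ card (set (take (Suc k) xs) - S)
          = card (proper_choices A HE S) * q ^ card (set (take k xs) - S) * q" by simp
      also have "\<dots> \<le> card (proper_choices A HE S') * q" using IH by (rule mult_right_mono) simp
      also have "\<dots> \<le> card (proper_choices A HE (insert x S'))" by (rule step)
      finally show ?thesis using take_Suc by (simp add: S'_def)
    qed
  qed simp
  from this[of "length xs"] show ?thesis by simp
qed

lemma col_ordering:
  assumes "finite V"
  obtains xs where "distinct xs" "set xs = V"
    "\<And>i. i < length xs \<Longrightarrow> card {j. j < i \<and> {xs ! j, xs ! i} \<in> E} + 1 \<le> col V E"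
proof -
  obtain xs where xs: "distinct xs" "set xs = V" using finite_distinct_list[OF assms] by blast
  have "card {j. j < i \<and> {xs ! j, xs ! i} \<in> E} + 1 \<le> length xs + 1" if "i < length xs" for i
  proof -
    have "card {j. j < i \<and> {xs ! j, xs ! i} \<in> E} \<le> card {..<i}" by (rule card_mono) auto
    with that show ?thesis by simp
  qed
  then have "\<exists>d xs. distinct xs \<and> set xs = V \<and>
      (\<forall>i<length xs. card {j. j < i \<and> {xs ! j, xs ! i} \<in> E} + 1 \<le> d)"
    using xs by blast
  then have "\<exists>xs. distinct xs \<and> set xs = V \<and>
      (\<forall>i<length xs. card {j. j < i \<and> {xs ! j, xs ! i} \<in> E} + 1 \<le> col V E)"
    unfolding col_def by (rule LeastI_ex)
  then show ?thesis using that by blast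
qed

lemma card_earlier_neighbours_le:
  assumes "card {j. j < k \<and> {xs ! j, xs ! k} \<in> E} + 1 \<le> d" and "k < length xs" and "finite S"
  shows "card {y \<in> S \<union> set (take k xs). {y, xs ! k} \<in> E} + 1 \<le> card S + d"
proof -
  let ?J = "{j. j < k \<and> {xs ! j, xs ! k} \<in> E}"
  have "{y \<in> S \<union> set (take k xs). {y, xs ! k} \<in> E} \<subseteq> S \<union> (!) xs ` ?J"
    using \<open>k < length xs\<close> by (auto simp: in_set_conv_nth)
  then have "card {y \<in> S \<union> set (take k xs). {y, xs ! k} \<in> E} \<le> card (S \<union> (!) xs ` ?J)"
    by (rule card_mono[rotated]) (simp add: \<open>finite S\<close>)
  also have "\<dots> \<le> card S + card ((!) xs ` ?J)" by (rule card_Un_le)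
  also have "\<dots> \<le> card S + card ?J" using card_image_le[of ?J "(!) xs"] by simp
  finally show ?thesis using assms(1) by simp
qed

lemma proper_choice_inj:
  assumes "f \<in> proper_choices A HE S" and "\<And>y. y \<in> S \<Longrightarrow> A y \<subseteq> L y"
    and disj: "\<And>y z c. y \<in> S \<Longrightarrow> z \<in> S \<Longrightarrow> c \<in> L y \<Longrightarrow> c \<in> L z \<Longrightarrow> y = z"
  shows "inj_on f S"
proof (rule inj_onI)
  fix y z assume "y \<in> S" "z \<in> S" "f y = f z"
  moreover have "f y \<in> L y" "f z \<in> L z"
    using assms(1,2) \<open>y \<in> S\<close> \<open>z \<in> S\<close> by (auto simp: proper_choices_def PiE_iff)
  ultimately show "y = z" using disj by metis
qed

lemma inj_on_image_proper_choices:
  assumes "\<And>y. y \<in> S \<Longrightarrow> A y \<subseteq> L y"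
    and disj: "\<And>y z c. y \<in> S \<Longrightarrow> z \<in> S \<Longrightarrow> c \<in> L y \<Longrightarrow> c \<in> L z \<Longrightarrow> y = z"
  shows "inj_on (\<lambda>f. f ` S) (proper_choices A HE S)"
proof (rule inj_onI)
  fix f g assume f: "f \<in> proper_choices A HE S" and g: "g \<in> proper_choices A HE S" and eq: "f ` S = g ` S"
  have "f y = g y" if "y \<in> S" for y
  proof -
    have "f y \<in> g ` S" using eq that by blast
    then obtain z where "z \<in> S" "f y = g z" by blast
    moreover have "f y \<in> L y" "g z \<in> L z"
      using f g that \<open>z \<in> S\<close> assms(1) by (auto simp: proper_choices_def PiE_iff)
    ultimately show ?thesis using disj that by metis
  qed
  moreover have "f \<in> Pi\<^sub>E S A" "g \<in> Pi\<^sub>E S A" using f g by (simp_all add: proper_choices_def)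
  ultimately show "f = g" by (metis PiE_ext)
qed

section \<open>Covers of the join with an apex\<close>

locale apex_cover =
  fixes V :: "'a set" and E :: "'a set set" and w :: 'a
    and L :: "'a \<Rightarrow> 'b set" and HV :: "'b set" and HE :: "'b set set" and m :: nat
  assumes graph: "simple_graph V E"
    and w_new: "w \<notin> V"
    and cover: "is_cover (join_V w V) (join_E w V E) L HV HE"
    and m_fold: "m_fold (join_V w V) L m"
    and perfect: "\<forall>u\<in>join_V w V. \<forall>v\<in>join_V w V. {u, v} \<in> join_E w V E \<longrightarrow>
                    perfect_matching_between HE (L u) (L v)"
begin

lemma cover_insert: "is_cover (insert w V) (join_E w V E) L HV HE"
  using cover by (simp add: join_V_def)

lemma finite_V: "finite V"
  using graph by (simp add: simple_graph_def)

lemma finite_HV: "finite HV"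
  using is_cover_simple_graph[OF cover] by (simp add: simple_graph_def)

lemma card_join_V: "card (join_V w V) = Suc (card V)"
  using finite_V w_new by (simp add: join_V_def)

lemma finite_L: "u \<in> insert w V \<Longrightarrow> finite (L u)"
  and card_L: "u \<in> insert w V \<Longrightarrow> card (L u) = m"
  using m_fold by (auto simp: m_fold_def join_V_def)

lemma edge_vertices:
  assumes "{u, v} \<in> E" shows "u \<in> V" "v \<in> V" "u \<noteq> v"
proof -
  from graph assms obtain a b where "{u, v} = {a, b}" "a \<noteq> b" "a \<in> V" "b \<in> V"
    by (rule simple_graph_edgeE)
  then show "u \<in> V" "v \<in> V" "u \<noteq> v" by (auto simp: doubleton_eq_iff)
qed

lemma join_E_iff: "x \<in> V \<Longrightarrow> y \<in> V \<Longrightarrow> {x, y} \<in> join_E w V E \<longleftrightarrow> {x, y} \<in> E"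
  using w_new by (auto simp: join_E_def doubleton_eq_iff)

lemma apex_edge: "v \<in> V \<Longrightarrow> {w, v} \<in> join_E w V E"
  by (auto simp: join_E_def)

lemma matching_partner:
  assumes "u \<in> insert w V" "v \<in> insert w V" "{u, v} \<in> join_E w V E" "x \<in> L u"
  shows "\<exists>!y. y \<in> L v \<and> {x, y} \<in> HE"
  using perfect assms unfolding perfect_matching_between_def join_V_def by blast

definition apex_nbr :: "'b \<Rightarrow> 'a \<Rightarrow> 'b" where
  "apex_nbr t v = (THE y. y \<in> L v \<and> {t, y} \<in> HE)"

lemma apex_nbr:
  assumes "t \<in> L w" "v \<in> V"
  shows "apex_nbr t v \<in> L v" "{t, apex_nbr t v} \<in> HE"
    and "\<And>y. y \<in> L v \<Longrightarrow> {t, y} \<in> HE \<Longrightarrow> y = apex_nbr t v"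
proof -
  have ex1: "\<exists>!y. y \<in> L v \<and> {t, y} \<in> HE"
    using matching_partner[of w v t] assms apex_edge by blast
  then show "apex_nbr t v \<in> L v" "{t, apex_nbr t v} \<in> HE"
    unfolding apex_nbr_def by (metis (mono_tags, lifting) theI')+
  then show "\<And>y. y \<in> L v \<Longrightarrow> {t, y} \<in> HE \<Longrightarrow> y = apex_nbr t v" using ex1 by blast
qed

text \<open>In the notation of the paper, Lt t v is L^(t)(v), and HVt t, HEt t are the vertex and
  edge sets of H^(t).\<close>

definition Lt :: "'b \<Rightarrow> 'a \<Rightarrow> 'b set" where
  "Lt t v = L v - {z. {t, z} \<in> HE}"

definition HVt :: "'b \<Rightarrow> 'b set" where
  "HVt t = (\<Union>v\<in>V. Lt t v)"

definition HEt :: "'b \<Rightarrow> 'b set set" where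
  "HEt t = {e \<in> HE. e \<subseteq> HVt t}"

lemma Lt_subset: "Lt t v \<subseteq> L v"
  by (auto simp: Lt_def)

lemma Lt_eq:
  assumes "t \<in> L w" "v \<in> V" shows "Lt t v = L v - {apex_nbr t v}"
  unfolding Lt_def using apex_nbr[OF assms] by blast

lemma HVt_subset: "HVt t \<subseteq> HV"
  using Lt_subset is_cover_vertices[OF cover_insert] by (fastforce simp: HVt_def)

lemma not_adjacent_apex: "z \<in> HVt t \<Longrightarrow> {t, z} \<notin> HE"
  by (auto simp: HVt_def Lt_def)

lemma apex_notin_HVt: "t \<in> L w \<Longrightarrow> t \<notin> HVt t'"
  using is_cover_disjoint[OF cover_insert] w_new Lt_subset by (fastforce simp: HVt_def)

lemma independent_HEt_iff: "J \<subseteq> HVt t \<Longrightarrow> independent (HEt t) J \<longleftrightarrow> independent HE J"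
  by (auto simp: independent_def HEt_def)

lemma cover_Lt: "is_cover V E (Lt t) (HVt t) (HEt t)"
  unfolding HVt_def HEt_def using Lt_subset join_E_iff
  by (intro is_cover_restrict[OF cover_insert]) auto

lemma card_Lt: "t \<in> L w \<Longrightarrow> v \<in> V \<Longrightarrow> card (Lt t v) = m - 1"
  using Lt_eq apex_nbr(1) finite_L card_L by simp

lemma m_fold_Lt: "t \<in> L w \<Longrightarrow> m_fold V (Lt t) (m - 1)"
  using card_Lt finite_L finite_subset[OF Lt_subset] by (simp add: m_fold_def)

lemma apex_in_coloring:
  assumes I: "I \<in> DP_colorings (join_V w V) HV HE"
  shows "\<exists>t\<in>L w. t \<in> I"
proof (rule ccontr)
  assume "\<not> (\<exists>t\<in>L w. t \<in> I)"
  then have sub: "I \<subseteq> (\<Union>v\<in>V. L v)"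
    using I is_cover_vertices[OF cover_insert] by (auto simp: DP_colorings_def)
  have clique: "\<forall>u\<in>V. \<forall>x\<in>L u. \<forall>y\<in>L u. x \<noteq> y \<longrightarrow> {x, y} \<in> HE"
    using is_cover_clique[OF cover_insert] by blast
  have "independent HE I" using I by (simp add: DP_colorings_def)
  from card_independent_le[OF clique this sub finite_V] show False
    using I card_join_V by (simp add: DP_colorings_def)
qed

lemma insert_apex_coloring:
  assumes t: "t \<in> L w" and J: "J \<in> DP_colorings V (HVt t) (HEt t)"
  shows "insert t J \<in> DP_colorings (join_V w V) HV HE"
proof -
  have sub: "J \<subseteq> HVt t" and indep: "independent HE J" and card: "card J = card V"
    using J independent_HEt_iff by (auto simp: DP_colorings_def)
  have "insert t J \<subseteq> HV" using sub HVt_subset t is_cover_vertices[OF cover_insert] by auto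
  moreover have "independent HE (insert t J)"
    using indep sub not_adjacent_apex simple_graph_no_loop[OF is_cover_simple_graph[OF cover]]
    by (auto simp: independent_insert)
  moreover have "card (insert t J) = card (join_V w V)"
    using sub apex_notin_HVt[OF t] finite_subset[OF sub] HVt_subset finite_HV card card_join_V
    by (metis card_insert_disjoint finite_subset subsetD)
  ultimately show ?thesis by (simp add: DP_colorings_def)
qed

lemma remove_apex_coloring:
  assumes t: "t \<in> L w" and I: "I \<in> DP_colorings (join_V w V) HV HE" "t \<in> I"
  shows "I - {t} \<in> DP_colorings V (HVt t) (HEt t)"
proof -
  have sub: "I \<subseteq> HV" and indep: "independent HE I" and card: "card I = card (join_V w V)"
    using I by (auto simp: DP_colorings_def)
  have "I - {t} \<subseteq> HVt t"
  proof
    fix y assume y: "y \<in> I - {t}"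
    then obtain u where u: "u \<in> insert w V" "y \<in> L u"
      using sub is_cover_vertices[OF cover_insert] by blast
    have "{t, y} \<notin> HE" using indep I(2) y by (auto simp: independent_def)
    then have "u \<noteq> w" using is_cover_clique[OF cover_insert, of w t y] t u y by auto
    with u \<open>{t, y} \<notin> HE\<close> show "y \<in> HVt t" by (auto simp: HVt_def Lt_def)
  qed
  moreover have "card (I - {t}) = card V"
    using card I(2) card_join_V finite_subset[OF sub finite_HV] by simp
  ultimately show ?thesis
    using indep independent_HEt_iff by (auto simp: DP_colorings_def independent_def)
qed

lemma colorings_through_apex:
  assumes t: "t \<in> L w"
  shows "{I \<in> DP_colorings (join_V w V) HV HE. t \<in> I} = insert t ` DP_colorings V (HVt t) (HEt t)"
proof
  show "{I \<in> DP_colorings (join_V w V) HV HE. t \<in> I} \<subseteq> insert t ` DP_colorings V (HVt t) (HEt t)"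
  proof
    fix I assume "I \<in> {I \<in> DP_colorings (join_V w V) HV HE. t \<in> I}"
    then have "I - {t} \<in> DP_colorings V (HVt t) (HEt t)" "I = insert t (I - {t})"
      using remove_apex_coloring[OF t] by auto
    then show "I \<in> insert t ` DP_colorings V (HVt t) (HEt t)" by (rule rev_image_eqI)
  qed
  show "insert t ` DP_colorings V (HVt t) (HEt t) \<subseteq> {I \<in> DP_colorings (join_V w V) HV HE. t \<in> I}"
    using insert_apex_coloring[OF t] by blast
qed

lemma P_DP_cover_join_eq_sum:
  "P_DP_cover (join_V w V) HV HE = (\<Sum>t\<in>L w. P_DP_cover V (HVt t) (HEt t))"
proof -
  let ?C = "DP_colorings (join_V w V) HV HE"
  have "?C = (\<Union>t\<in>L w. {I \<in> ?C. t \<in> I})" by (blast dest: apex_in_coloring)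
  then have "card ?C = card (\<Union>t\<in>L w. {I \<in> ?C. t \<in> I})" by (rule arg_cong)
  also have "\<dots> = (\<Sum>t\<in>L w. card {I \<in> ?C. t \<in> I})"
  proof (intro card_UN_disjoint ballI impI)
    show "finite (L w)" using finite_L by simp
    show "finite {I \<in> ?C. t \<in> I}" for t using finite_DP_colorings[OF finite_HV] by (rule finite_subset[rotated]) blast
    fix t t' assume "t \<in> L w" "t' \<in> L w" "t \<noteq> t'"
    then have "{t, t'} \<in> HE" using is_cover_clique[OF cover_insert] by blast
    then show "{I \<in> ?C. t \<in> I} \<inter> {I \<in> ?C. t' \<in> I} = {}"
      by (auto simp: DP_colorings_def independent_def)
  qed
  also have "\<dots> = (\<Sum>t\<in>L w. card (DP_colorings V (HVt t) (HEt t)))"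
  proof (rule sum.cong)
    fix t assume t: "t \<in> L w"
    have "t \<notin> J" if "J \<in> DP_colorings V (HVt t) (HEt t)" for J
      using apex_notin_HVt[OF t] that by (auto simp: DP_colorings_def)
    then have "inj_on (insert t) (DP_colorings V (HVt t) (HEt t))"
      unfolding inj_on_def by (metis insert_ident)
    then show "card {I \<in> ?C. t \<in> I} = card (DP_colorings V (HVt t) (HEt t))"
      by (simp add: colorings_through_apex[OF t] card_image)
  qed simp
  finally show ?thesis by (simp add: P_DP_cover_eq_card)
qed

lemma edge_eq_doubleton: "e \<in> E \<Longrightarrow> x \<in> e \<Longrightarrow> y \<in> e \<Longrightarrow> x \<noteq> y \<Longrightarrow> e = {x, y}"
  by (erule simple_graph_edgeE[OF graph]) auto

definition lifted_edges :: "'b \<Rightarrow> 'a set \<Rightarrow> 'b set set" where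
  "lifted_edges t e = {f \<in> HE. \<exists>x\<in>e. \<exists>y\<in>e. x \<noteq> y \<and> (\<exists>a\<in>Lt t x. \<exists>b\<in>Lt t y. f = {a, b})}"

lemma cross_edges_eq_Union:
  "{f \<in> HE. \<exists>x\<in>V. \<exists>y\<in>V. x \<noteq> y \<and> (\<exists>a\<in>Lt t x. \<exists>b\<in>Lt t y. f = {a, b})} = (\<Union>e\<in>E. lifted_edges t e)"
proof
  show "{f \<in> HE. \<exists>x\<in>V. \<exists>y\<in>V. x \<noteq> y \<and> (\<exists>a\<in>Lt t x. \<exists>b\<in>Lt t y. f = {a, b})} \<subseteq> (\<Union>e\<in>E. lifted_edges t e)"
  proof
    fix f assume "f \<in> {f \<in> HE. \<exists>x\<in>V. \<exists>y\<in>V. x \<noteq> y \<and> (\<exists>a\<in>Lt t x. \<exists>b\<in>Lt t y. f = {a, b})}"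
    then obtain x y a b where f: "f \<in> HE" "f = {a, b}" and xy: "x \<in> V" "y \<in> V" "x \<noteq> y"
      and ab: "a \<in> Lt t x" "b \<in> Lt t y" by blast
    have "{x, y} \<in> E"
      using is_cover_edge[OF cover_insert, of x y a b] xy ab f Lt_subset join_E_iff by blast
    moreover have "f \<in> lifted_edges t {x, y}" using f xy ab by (auto simp: lifted_edges_def)
    ultimately show "f \<in> (\<Union>e\<in>E. lifted_edges t e)" by blast
  qed
  show "(\<Union>e\<in>E. lifted_edges t e) \<subseteq> {f \<in> HE. \<exists>x\<in>V. \<exists>y\<in>V. x \<noteq> y \<and> (\<exists>a\<in>Lt t x. \<exists>b\<in>Lt t y. f = {a, b})}"
    using simple_graph_edge_subset[OF graph] unfolding lifted_edges_def by blast
qed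

lemma lifted_edges_disjoint:
  assumes "e \<in> E" "e' \<in> E" "f \<in> lifted_edges t e" "f \<in> lifted_edges t e'"
  shows "e = e'"
proof -
  obtain x y a b where xy: "x \<in> e" "y \<in> e" "x \<noteq> y" and ab: "a \<in> L x" "b \<in> L y" "f = {a, b}"
    using assms(3) Lt_subset unfolding lifted_edges_def by blast
  obtain x' y' a' b' where xy': "x' \<in> e'" "y' \<in> e'" "x' \<noteq> y'" and ab': "a' \<in> L x'" "b' \<in> L y'" "f = {a', b'}"
    using assms(4) Lt_subset unfolding lifted_edges_def by blast
  have V: "x \<in> insert w V" "y \<in> insert w V" "x' \<in> insert w V" "y' \<in> insert w V"
    using xy xy' assms(1,2) simple_graph_edge_subset[OF graph] by auto
  have "a = a' \<and> b = b' \<or> a = b' \<and> b = a'" using ab(3) ab'(3) by (auto simp: doubleton_eq_iff)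
  then have "{x, y} = {x', y'}"
    using is_cover_disjoint[OF cover_insert] V ab ab' by (metis insert_commute)
  then show ?thesis using edge_eq_doubleton assms(1,2) xy xy' by metis
qed

lemma card_lifted_edges_aligned:
  assumes t: "t \<in> L w" and xy: "{x, y} \<in> E" and aligned: "{apex_nbr t x, apex_nbr t y} \<in> HE"
  shows "card (lifted_edges t {x, y}) = m - 1"
proof -
  have V: "x \<in> V" "y \<in> V" "x \<noteq> y" using edge_vertices[OF xy] by auto
  have "lifted_edges t {x, y} = {f \<in> HE. \<exists>a\<in>Lt t x. \<exists>b\<in>Lt t y. f = {a, b}}"
    using V by (auto simp: lifted_edges_def insert_commute)
  moreover have "perfect_matching_between HE (Lt t x) (Lt t y)"
    unfolding Lt_eq[OF t V(1)] Lt_eq[OF t V(2)]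
    using perfect xy V join_E_iff apex_nbr(1)[OF t] aligned
    by (intro perfect_matching_between_Diff) (auto simp: join_V_def)
  moreover have "Lt t x \<inter> Lt t y = {}"
    using is_cover_disjoint[OF cover_insert] V Lt_subset by blast
  ultimately have "card (lifted_edges t {x, y}) = card (Lt t x)"
    using finite_L V finite_subset[OF Lt_subset] by (simp add: card_edges_between)
  then show ?thesis using card_Lt[OF t V(1)] by simp
qed

lemma level_if_aligned:
  assumes t: "t \<in> L w" and aligned: "\<And>x y. {x, y} \<in> E \<Longrightarrow> {apex_nbr t x, apex_nbr t y} \<in> HE"
  shows "level_vertex V E L HE m t"
proof -
  have "cross_edges_count V L HE t = card (\<Union>e\<in>E. lifted_edges t e)"
    unfolding cross_edges_count_def Lt_def[symmetric] cross_edges_eq_Union ..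
  also have "\<dots> = (\<Sum>e\<in>E. card (lifted_edges t e))"
  proof (rule card_UN_disjoint)
    show "finite E" using simple_graph_finite_edges[OF graph] .
    show "\<forall>e\<in>E. finite (lifted_edges t e)"
      using simple_graph_finite_edges[OF is_cover_simple_graph[OF cover]] by (simp add: lifted_edges_def)
    show "\<forall>e\<in>E. \<forall>e'\<in>E. e \<noteq> e' \<longrightarrow> lifted_edges t e \<inter> lifted_edges t e' = {}"
      using lifted_edges_disjoint by blast
  qed
  also have "\<dots> = (\<Sum>e\<in>E. m - 1)"
  proof (rule sum.cong)
    fix e assume "e \<in> E"
    then obtain x y where "e = {x, y}" by (blast elim: simple_graph_edgeE[OF graph])
    then show "card (lifted_edges t e) = m - 1"
      using card_lifted_edges_aligned[OF t] aligned \<open>e \<in> E\<close> by blast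
  qed simp
  finally show ?thesis by (simp add: level_vertex_def)
qed

lemma no_edge_between_lists:
  "x \<in> V \<Longrightarrow> y \<in> V \<Longrightarrow> x \<noteq> y \<Longrightarrow> {x, y} \<notin> E \<Longrightarrow> a \<in> L x \<Longrightarrow> b \<in> L y \<Longrightarrow> {a, b} \<notin> HE"
  using is_cover_edge[OF cover_insert, of x y a b] join_E_iff by auto

lemma card_neighbours_in_list_le_1:
  assumes "x \<in> V" "y \<in> V" "x \<noteq> y" "c \<in> L y" "B \<subseteq> L x"
  shows "card {c' \<in> B. {c, c'} \<in> HE} \<le> 1"
proof -
  have "c1 = c2" if "c1 \<in> B" "c2 \<in> B" "{c, c1} \<in> HE" "{c, c2} \<in> HE" for c1 c2
  proof -
    have "{y, x} \<in> join_E w V E"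
      using is_cover_edge[OF cover_insert, of y x c c1] assms that by auto
    then show ?thesis using is_cover_matching[OF cover_insert, of y x c c1 c2] assms that by auto
  qed
  moreover have "finite B" using assms finite_L finite_subset by blast
  ultimately show ?thesis by (auto simp: card_le_Suc0_iff_eq)
qed

definition pinned_lists :: "'b \<Rightarrow> 'a \<Rightarrow> 'b \<Rightarrow> 'a \<Rightarrow> 'b \<Rightarrow> 'a \<Rightarrow> 'b set" where
  "pinned_lists t u a v b z = (if z = u then {a} else if z = v then {b} else Lt t z)"

lemma card_pinned_proper_choices_pair:
  assumes "u \<noteq> v" "{a, b} \<notin> HE"
  shows "1 \<le> card (proper_choices (pinned_lists t u a v b) HE {u, v})"
proof -
  let ?f = "(\<lambda>_. undefined)(u := a, v := b)"
  have "?f \<in> Pi\<^sub>E {u, v} (pinned_lists t u a v b)"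
    using assms(1) by (auto simp: pinned_lists_def PiE_iff extensional_def)
  moreover have "independent HE {a, b}"
    using assms(2) simple_graph_no_loop[OF is_cover_simple_graph[OF cover]]
    by (auto simp: independent_def insert_commute)
  ultimately have "?f \<in> proper_choices (pinned_lists t u a v b) HE {u, v}"
    using assms(1) by (simp add: proper_choices_def)
  moreover have "finite (proper_choices (pinned_lists t u a v b) HE {u, v})"
    by (rule finite_proper_choices) (auto simp: pinned_lists_def)
  ultimately show ?thesis by (metis One_nat_def Suc_leI card_gt_0_iff empty_iff)
qed

lemma card_proper_choices_pinned_ge:
  assumes t: "t \<in> L w" and uv: "u \<in> V" "v \<in> V" "u \<noteq> v"
    and ab: "a \<in> Lt t u" "b \<in> Lt t v" "{a, b} \<notin> HE" and m: "col V E + 2 \<le> m"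
  shows "(m - col V E - 2) ^ (card V - 2) \<le> card (proper_choices (pinned_lists t u a v b) HE V)"
proof -
  let ?A = "pinned_lists t u a v b"
  have A_L: "?A z \<subseteq> L z" for z using ab Lt_subset by (auto simp: pinned_lists_def)
  obtain xs where xs: "distinct xs" "set xs = V"
    and degree: "\<And>i. i < length xs \<Longrightarrow> card {j. j < i \<and> {xs ! j, xs ! i} \<in> E} + 1 \<le> col V E"
    using col_ordering[OF finite_V] by blast
  have "card (proper_choices ?A HE {u, v}) * (m - col V E - 2) ^ card (set xs - {u, v})
      \<le> card (proper_choices ?A HE ({u, v} \<union> set xs))"
  proof (rule card_proper_choices_extend[OF xs(1)])
    show "finite (?A y)" if "y \<in> {u, v} \<union> set xs" for y
      using finite_subset[OF A_L] finite_L that uv xs(2) by blast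
    show "{c} \<notin> HE" for c using simple_graph_no_loop[OF is_cover_simple_graph[OF cover]] .
    show "card {c' \<in> ?A x. {c, c'} \<in> HE} \<le> 1"
      if "x \<in> set xs" "y \<in> {u, v} \<union> set xs" "y \<noteq> x" "c \<in> ?A y" for x y c
      using card_neighbours_in_list_le_1 A_L that uv xs(2) by blast
    show "{c, c'} \<notin> HE"
      if "x \<in> set xs" "y \<in> {u, v} \<union> set xs" "y \<noteq> x" "{y, x} \<notin> E" "c \<in> ?A y" "c' \<in> ?A x" for x y c c'
      using no_edge_between_lists A_L that uv xs(2) by blast
    show "m - col V E - 2 + card {y \<in> {u, v} \<union> set (take k xs). {y, xs ! k} \<in> E} \<le> card (?A (xs ! k))"
      if k: "k < length xs" "xs ! k \<notin> {u, v}" for k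
      using card_earlier_neighbours_le[OF degree[OF k(1)] k(1), of "{u, v}"] uv(3) k m
        card_Lt[OF t] nth_mem[OF k(1)] xs(2)
      by (simp add: pinned_lists_def)
  qed simp
  moreover have "1 \<le> card (proper_choices ?A HE {u, v})"
    using card_pinned_proper_choices_pair uv(3) ab(3) .
  moreover have "card (set xs - {u, v}) = card V - 2" "{u, v} \<union> set xs = V"
    using uv xs(2) finite_V by (auto simp: card_Diff_subset)
  ultimately show ?thesis by (metis mult_1 mult_le_mono1 order_trans)
qed

lemma card_pinned_colorings_ge:
  assumes t: "t \<in> L w" and uv: "u \<in> V" "v \<in> V" "u \<noteq> v"
    and ab: "a \<in> Lt t u" "b \<in> Lt t v" "{a, b} \<notin> HE" and m: "col V E + 2 \<le> m"
  shows "(m - col V E - 2) ^ (card V - 2) \<le> card {J \<in> DP_colorings V (HVt t) (HEt t). a \<in> J \<and> b \<in> J}"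
proof -
  let ?A = "pinned_lists t u a v b"
  have A_Lt: "?A z \<subseteq> Lt t z" for z using ab by (auto simp: pinned_lists_def)
  have disj: "y = z" if "y \<in> V" "z \<in> V" "c \<in> L y" "c \<in> L z" for y z c
    using is_cover_disjoint[OF cover_insert] that by blast
  have "(\<lambda>f. f ` V) ` proper_choices ?A HE V \<subseteq> {J \<in> DP_colorings V (HVt t) (HEt t). a \<in> J \<and> b \<in> J}"
  proof clarify
    fix f assume f: "f \<in> proper_choices ?A HE V"
    then have fA: "\<And>z. z \<in> V \<Longrightarrow> f z \<in> ?A z" by (auto simp: proper_choices_def)
    then have "f ` V \<subseteq> HVt t" using A_Lt by (auto simp: HVt_def)
    moreover have "card (f ` V) = card V"
      using proper_choice_inj[OF f, of L] A_Lt Lt_subset disj by (meson card_image order_trans)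
    moreover have "independent HE (f ` V)" using f by (simp add: proper_choices_def)
    moreover have "f u = a" "f v = b" using fA[OF uv(1)] fA[OF uv(2)] uv(3) by (auto simp: pinned_lists_def)
    ultimately show "f ` V \<in> DP_colorings V (HVt t) (HEt t) \<and> a \<in> f ` V \<and> b \<in> f ` V"
      using independent_HEt_iff uv by (auto simp: DP_colorings_def)
  qed
  moreover have "inj_on (\<lambda>f. f ` V) (proper_choices ?A HE V)"
    using inj_on_image_proper_choices[of V ?A L] A_Lt Lt_subset disj by (meson order_trans)
  moreover have "finite {J \<in> DP_colorings V (HVt t) (HEt t). a \<in> J \<and> b \<in> J}"
    using finite_DP_colorings[OF finite_subset[OF HVt_subset finite_HV]]
    by (rule finite_subset[rotated]) blast
  ultimately have "card (proper_choices ?A HE V) \<le> card {J \<in> DP_colorings V (HVt t) (HEt t). a \<in> J \<and> b \<in> J}"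
    by (intro card_inj_on_le)
  then show ?thesis using card_proper_choices_pinned_ge[OF assms] by linarith
qed

lemma free_pair_of_misaligned_edge:
  assumes t: "t \<in> L w" and uv: "{u, v} \<in> E" and misaligned: "{apex_nbr t u, apex_nbr t v} \<notin> HE"
  obtains a b where "a \<in> Lt t u" "b \<in> Lt t v"
    "\<And>y. y \<in> Lt t v \<Longrightarrow> {a, y} \<notin> HE" "\<And>y. y \<in> Lt t u \<Longrightarrow> {b, y} \<notin> HE"
proof -
  have V: "u \<in> V" "v \<in> V" "u \<noteq> v" using edge_vertices[OF uv] by auto
  have J: "{u, v} \<in> join_E w V E" "{v, u} \<in> join_E w V E"
    using uv V join_E_iff by (auto simp: insert_commute)
  note nbr = apex_nbr(1)[OF t V(1)] apex_nbr(1)[OF t V(2)]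
  obtain a where a: "a \<in> L u" "{apex_nbr t v, a} \<in> HE"
    using matching_partner[of v u "apex_nbr t v"] V J nbr by blast
  obtain b where b: "b \<in> L v" "{apex_nbr t u, b} \<in> HE"
    using matching_partner[of u v "apex_nbr t u"] V J nbr by blast
  have "{a, y} \<notin> HE" if "y \<in> Lt t v" for y
  proof
    assume "{a, y} \<in> HE"
    then have "y = apex_nbr t v"
      using is_cover_matching[OF cover_insert, of u v a y "apex_nbr t v"] a V J nbr that Lt_subset
      by (auto simp: insert_commute)
    then show False using that Lt_eq[OF t V(2)] by simp
  qed
  moreover have "{b, y} \<notin> HE" if "y \<in> Lt t u" for y
  proof
    assume "{b, y} \<in> HE"
    then have "y = apex_nbr t u"
      using is_cover_matching[OF cover_insert, of v u b y "apex_nbr t u"] b V J nbr that Lt_subset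
      by (auto simp: insert_commute)
    then show False using that Lt_eq[OF t V(1)] by simp
  qed
  moreover have "a \<in> Lt t u" using a misaligned Lt_eq[OF t V(1)] by (auto simp: insert_commute)
  moreover have "b \<in> Lt t v" using b misaligned Lt_eq[OF t V(2)] by auto
  ultimately show ?thesis using that by blast
qed

lemma nonlevel_bound:
  assumes t: "t \<in> L w" and nonlevel: "\<not> level_vertex V E L HE m t" and m: "col V E + 2 \<le> m"
  shows "P_DP V E (m - 1) + (m - col V E - 2) ^ (card V - 2) \<le> P_DP_cover V (HVt t) (HEt t)"
proof -
  obtain u v where uv: "{u, v} \<in> E" and "{apex_nbr t u, apex_nbr t v} \<notin> HE"
    using level_if_aligned[OF t] nonlevel by blast
  then obtain a b where ab: "a \<in> Lt t u" "b \<in> Lt t v"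
    and a_free: "\<And>y. y \<in> Lt t v \<Longrightarrow> {a, y} \<notin> HE" and b_free: "\<And>y. y \<in> Lt t u \<Longrightarrow> {b, y} \<notin> HE"
    by (rule free_pair_of_misaligned_edge[OF t]) blast
  have V: "u \<in> V" "v \<in> V" "u \<noteq> v" using edge_vertices[OF uv] by auto
  let ?D = "DP_colorings V (HVt t) (HEt t)"
  let ?H' = "insert {a, b} (HEt t)"
  have "is_cover V E (Lt t) (HVt t) ?H'"
    using cover_Lt V uv ab a_free b_free by (intro is_cover_insert_edge) (auto simp: HEt_def)
  then have "P_DP V E (m - 1) \<le> P_DP_cover V (HVt t) ?H'"
    using P_DP_le_P_DP_cover m_fold_Lt[OF t] finite_V by blast
  also have "\<dots> = card {J \<in> ?D. \<not> (a \<in> J \<and> b \<in> J)}"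
    unfolding P_DP_cover_eq_card DP_colorings_def independent_insert_edge
    by (rule arg_cong[where f = card]) auto
  finally have "P_DP V E (m - 1) \<le> card {J \<in> ?D. \<not> (a \<in> J \<and> b \<in> J)}" .
  moreover have "(m - col V E - 2) ^ (card V - 2) \<le> card {J \<in> ?D. a \<in> J \<and> b \<in> J}"
    using card_pinned_colorings_ge[OF t V ab a_free[OF ab(2)] m] .
  moreover have "card ?D = card {J \<in> ?D. a \<in> J \<and> b \<in> J} + card {J \<in> ?D. \<not> (a \<in> J \<and> b \<in> J)}"
    using card_Int_Diff[OF finite_DP_colorings[OF finite_subset[OF HVt_subset finite_HV]],
        of V t "HEt t" "{J. a \<in> J \<and> b \<in> J}"]
    by (simp add: Int_def set_diff_eq)
  ultimately show ?thesis by (simp add: P_DP_cover_eq_card)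
qed

end

theorem mainTheorem17:
  fixes V :: "'a set" and E :: "'a set set" and w :: 'a
    and L :: "'a \<Rightarrow> 'b set" and HV :: "'b set" and HE :: "'b set set"
    and n d m s :: nat
  assumes G: "simple_graph V E" and conn: "connected_graph V E"
    and n_def: "n = card V"
    and d_def: "d = col V E" and d3: "d \<ge> 3"
    and w_new: "w \<notin> V"
    and cover: "is_cover (join_V w V) (join_E w V E) L HV HE"
    and mfold: "m_fold (join_V w V) L m"
    and m_ge: "m \<ge> d + 3"
    and perfect: "\<forall>u\<in>join_V w V. \<forall>v\<in>join_V w V. {u, v} \<in> join_E w V E \<longrightarrow>
                    perfect_matching_between HE (L u) (L v)"
    and s_def: "s = card {t \<in> L w. \<not> level_vertex V E L HE m t}"
  shows "P_DP_cover (join_V w V) HV HE \<ge> m * P_DP V E (m - 1) + s * (m - d - 2) ^ (n - 2)"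
proof -
  interpret apex_cover V E w L HV HE m
    using G w_new cover mfold perfect by unfold_locales
  let ?P = "P_DP V E (m - 1)" and ?X = "(m - d - 2) ^ (n - 2)"
  let ?nonlevel = "\<lambda>t. \<not> level_vertex V E L HE m t"
  have bound: "?P + (if ?nonlevel t then ?X else 0) \<le> P_DP_cover V (HVt t) (HEt t)" if "t \<in> L w" for t
    using nonlevel_bound[OF that] P_DP_le_P_DP_cover[OF cover_Lt m_fold_Lt[OF that] finite_V]
      m_ge d_def n_def by auto
  have "m * ?P + s * ?X = (\<Sum>t\<in>L w. ?P + (if ?nonlevel t then ?X else 0))"
    using finite_L card_L sum.inter_filter[of "L w" "\<lambda>_. ?X" ?nonlevel] by (simp add: sum.distrib s_def)
  also have "\<dots> \<le> (\<Sum>t\<in>L w. P_DP_cover V (HVt t) (HEt t))" by (rule sum_mono) (rule bound)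
  also have "\<dots> = P_DP_cover (join_V w V) HV HE" by (rule P_DP_cover_join_eq_sum[symmetric])
  finally show ?thesis .
qed

end
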